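(* For a locally compact group $G$ the following are equivalent: (i) $G$ admits a uniform, coarsely geodesic metric; (ii) $G$ admits a uniform, quasi-geodesic metric; (iii) $G$ admits a left-invariant, proper, quasi-geodesic metric; (iv) $G$ admits a left-invariant proper metric for which it is quasi-isometric to a graph of bounded degree; (v) $G$ is compactly generated.
   Context: A metric $d$ on $G$ is uniform if for sequences $(g_n,h_n)$, $d(g_n,h_n)\to\infty$ iff $g_n^{-1}h_n$ eventually leaves every compact subset. Proper: closed balls are compact. For $b>0$, a $b$-chain from $x$ to $y$ is $x=x_0,\dots,x_m=y$ with $d(x_i,x_{i+1})\le b$; $d_b(x,y)=\inf\sum_i d(x_i,x_{i-1})$ over $b$-chains. $(X,d)$ is quasi-geodesic if for some $b>0$ the identity $(X,d)\to(X,d_b)$ is a quasi-isometry; coarsely geodesic if for some $b>0$, $d_b$ is finite and for every $R$ there is $R'$ with $d(x,y)\le R\Rightarrow d_b(x,y)\le R'$ (the identity $(X,d_b)\to(X,d)$ is a uniform embedding). A quasi-isometry $F$ satisfies $C^{-1}d(x,y)-C\le d(F(x),F(y))\le Cd(x,y)+C$ and has image at bounded distance from every point; graphs carry their path metric. *)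

theory Defs
  imports "HOL-Analysis.Analysis"
begin

text \<open>Groups are written additively (class group_add, not assumed commutative);
 a topological group is a type of class topological_group_add.\<close>

definition is_metric :: "('a \<Rightarrow> 'a \<Rightarrow> real) \<Rightarrow> bool" where
  "is_metric d \<longleftrightarrow> (\<forall>x y. d x y = 0 \<longleftrightarrow> x = y) \<and> (\<forall>x y. d x y = d y x)
     \<and> (\<forall>x y z. d x z \<le> d x y + d y z)"

definition uniform_metric :: "('a::topological_group_add \<Rightarrow> 'a \<Rightarrow> real) \<Rightarrow> bool" where
  "uniform_metric d \<longleftrightarrow> is_metric d \<and>
     (\<forall>g h :: nat \<Rightarrow> 'a.
        filterlim (\<lambda>n. d (g n) (h n)) at_top sequentially \<longleftrightarrow>
        (\<forall>K. compact K \<longrightarrow> eventually (\<lambda>n. - g n + h n \<notin> K) sequentially))"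

definition left_invariant :: "('a::group_add \<Rightarrow> 'a \<Rightarrow> real) \<Rightarrow> bool" where
  "left_invariant d \<longleftrightarrow> (\<forall>g x y. d (g + x) (g + y) = d x y)"

definition proper_metric :: "('a::topological_space \<Rightarrow> 'a \<Rightarrow> real) \<Rightarrow> bool" where
  "proper_metric d \<longleftrightarrow> (\<forall>x r. compact {y. d x y \<le> r})"

definition b_chains :: "('a \<Rightarrow> 'a \<Rightarrow> real) \<Rightarrow> real \<Rightarrow> 'a \<Rightarrow> 'a \<Rightarrow> 'a list set" where
  "b_chains d b x y = {xs. xs \<noteq> [] \<and> hd xs = x \<and> last xs = y \<and>
      (\<forall>i. Suc i < length xs \<longrightarrow> d (xs ! i) (xs ! Suc i) \<le> b)}"

definition chain_length :: "('a \<Rightarrow> 'a \<Rightarrow> real) \<Rightarrow> 'a list \<Rightarrow> real" where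
  "chain_length d xs = (\<Sum>i<length xs - 1. d (xs ! i) (xs ! Suc i))"

definition chain_dist :: "('a \<Rightarrow> 'a \<Rightarrow> real) \<Rightarrow> real \<Rightarrow> 'a \<Rightarrow> 'a \<Rightarrow> real" where
  "chain_dist d b x y = Inf (chain_length d ` b_chains d b x y)"

text \<open>d_b is finite (real-valued) iff every pair is joined by a b-chain\<close>
definition b_chain_connected :: "('a \<Rightarrow> 'a \<Rightarrow> real) \<Rightarrow> real \<Rightarrow> bool" where
  "b_chain_connected d b \<longleftrightarrow> (\<forall>x y. b_chains d b x y \<noteq> {})"

definition quasi_isometry ::
  "'a set \<Rightarrow> ('a \<Rightarrow> 'a \<Rightarrow> real) \<Rightarrow> 'b set \<Rightarrow> ('b \<Rightarrow> 'b \<Rightarrow> real) \<Rightarrow> ('a \<Rightarrow> 'b) \<Rightarrow> bool" where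
  "quasi_isometry X d Y e F \<longleftrightarrow> F ` X \<subseteq> Y \<and> (\<exists>C>0.
     (\<forall>x\<in>X. \<forall>y\<in>X. d x y / C - C \<le> e (F x) (F y) \<and> e (F x) (F y) \<le> C * d x y + C) \<and>
     (\<forall>z\<in>Y. \<exists>x\<in>X. e z (F x) \<le> C))"

definition quasi_geodesic :: "('a \<Rightarrow> 'a \<Rightarrow> real) \<Rightarrow> bool" where
  "quasi_geodesic d \<longleftrightarrow> (\<exists>b>0. b_chain_connected d b \<and>
      quasi_isometry UNIV d UNIV (chain_dist d b) id)"

definition coarsely_geodesic :: "('a \<Rightarrow> 'a \<Rightarrow> real) \<Rightarrow> bool" where
  "coarsely_geodesic d \<longleftrightarrow> (\<exists>b>0. b_chain_connected d b \<and>
      (\<forall>R. \<exists>R'. \<forall>x y. d x y \<le> R \<longrightarrow> chain_dist d b x y \<le> R'))"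

definition is_graph :: "nat set \<Rightarrow> (nat \<Rightarrow> nat \<Rightarrow> bool) \<Rightarrow> bool" where
  "is_graph V E \<longleftrightarrow> (\<forall>x y. E x y \<longrightarrow> x \<in> V \<and> y \<in> V \<and> E y x \<and> x \<noteq> y)"

definition walk :: "(nat \<Rightarrow> nat \<Rightarrow> bool) \<Rightarrow> nat list \<Rightarrow> bool" where
  "walk E xs \<longleftrightarrow> xs \<noteq> [] \<and> (\<forall>i. Suc i < length xs \<longrightarrow> E (xs ! i) (xs ! Suc i))"

definition graph_connected :: "nat set \<Rightarrow> (nat \<Rightarrow> nat \<Rightarrow> bool) \<Rightarrow> bool" where
  "graph_connected V E \<longleftrightarrow> (\<forall>x\<in>V. \<forall>y\<in>V. \<exists>xs. walk E xs \<and> hd xs = x \<and> last xs = y)"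

definition graph_dist :: "(nat \<Rightarrow> nat \<Rightarrow> bool) \<Rightarrow> nat \<Rightarrow> nat \<Rightarrow> real" where
  "graph_dist E x y = real (LEAST n. \<exists>xs. walk E xs \<and> hd xs = x \<and> last xs = y \<and> length xs = Suc n)"

definition bounded_degree :: "nat set \<Rightarrow> (nat \<Rightarrow> nat \<Rightarrow> bool) \<Rightarrow> bool" where
  "bounded_degree V E \<longleftrightarrow> (\<exists>k::nat. \<forall>x\<in>V. finite {y. E x y} \<and> card {y. E x y} \<le> k)"

definition qi_to_bounded_degree_graph :: "('a \<Rightarrow> 'a \<Rightarrow> real) \<Rightarrow> bool" where
  "qi_to_bounded_degree_graph d \<longleftrightarrow> (\<exists>V E F. V \<noteq> {} \<and> is_graph V E \<and> graph_connected V E \<and>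
      bounded_degree V E \<and> quasi_isometry UNIV d V (graph_dist E) F)"

definition add_subgroup :: "'a::group_add set \<Rightarrow> bool" where
  "add_subgroup H \<longleftrightarrow> 0 \<in> H \<and> (\<forall>x\<in>H. \<forall>y\<in>H. x + y \<in> H) \<and> (\<forall>x\<in>H. - x \<in> H)"

definition generated_subgroup :: "'a::group_add set \<Rightarrow> 'a set" where
  "generated_subgroup K = \<Inter>{H. add_subgroup H \<and> K \<subseteq> H}"

definition compactly_generated :: "'a::topological_group_add itself \<Rightarrow> bool" where
  "compactly_generated _ \<longleftrightarrow> (\<exists>K::'a set. compact K \<and> generated_subgroup K = UNIV)"

end

(*
  If one of (i)-(iv) holds, there are a metric d and b > 0 such that every point is joined
  to 0 by a b-chain, and the steps -x + y of b-close pairs lie in a compact set K: for a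
  left-invariant proper metric K is the closed b-ball at 0, and for a uniform metric local
  compactness forces it, since otherwise some sequence of such steps would leave every compact
  set while d stays bounded by b. Along a b-chain from 0 to g every step lies in K, so K
  generates G.  (A quasi-isometry to a connected graph yields such chains by lifting walks.)

  Conversely, if G is compactly generated, the generating compact set can be enlarged to a
  compact symmetric neighbourhood S of 0.  The word metric of S is left-invariant, proper,
  uniform and geodesic at scale 1, and a maximal 3-separated net, with net points at word
  distance at most 5 joined by an edge, is a bounded-degree graph quasi-isometric to it.
*)

theory Submission
  imports Defs
begin

section \<open>Metrics, chains and walks\<close>

lemma is_metricD:
  assumes "is_metric d"
  shows "d x x = 0" "d x y = d y x" "d x y \<le> d x z + d z y"
  using assms unfolding is_metric_def by blast+

lemma walk_iff_successively: "walk E xs \<longleftrightarrow> xs \<noteq> [] \<and> successively E xs"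
  unfolding walk_def successively_conv_nth by simp

lemma mem_b_chains_iff:
  "xs \<in> b_chains d b x y \<longleftrightarrow>
     xs \<noteq> [] \<and> hd xs = x \<and> last xs = y \<and> successively (\<lambda>u v. d u v \<le> b) xs"
  unfolding b_chains_def successively_conv_nth by simp

lemma chain_length_singleton [simp]: "chain_length d [x] = 0"
  by (simp add: chain_length_def)

lemma chain_length_Cons_Cons [simp]:
  "chain_length d (x # y # xs) = d x y + chain_length d (y # xs)"
  unfolding chain_length_def by (simp del: sum.lessThan_Suc add: sum.lessThan_Suc_shift)

lemma dist_le_chain_length:
  assumes "is_metric d" and "xs \<noteq> []"
  shows "d (hd xs) (last xs) \<le> chain_length d xs"
  using assms(2)
proof (induction xs rule: induct_list012)
  case (2 x)
  then show ?case using is_metricD(1)[OF assms(1)] by simp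
next
  case (3 x y zs)
  with is_metricD(3)[OF assms(1), of x "last (y # zs)" y] show ?case by simp
qed simp

lemma chain_length_le:
  assumes "successively (\<lambda>u v. d u v \<le> b) xs"
  shows "chain_length d xs \<le> b * real (length xs - 1)"
proof -
  have "chain_length d xs \<le> (\<Sum>i<length xs - 1. b)"
    unfolding chain_length_def
    using successively_nth[OF assms] by (intro sum_mono) simp
  then show ?thesis by (simp add: mult.commute)
qed

lemma dist_hd_last_le_steps:
  assumes "is_metric d" "successively (\<lambda>u v. d u v \<le> b) xs" "xs \<noteq> []"
  shows "d (hd xs) (last xs) \<le> b * real (length xs - 1)"
  using dist_le_chain_length[OF assms(1,3)] chain_length_le[OF assms(2)] by linarith

lemma graph_dist_le_length:
  assumes "walk E xs" "hd xs = a" "last xs = b"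
  shows "graph_dist E a b \<le> real (length xs - 1)"
proof -
  have "xs \<noteq> []" using assms(1) by (simp add: walk_def)
  then have "(LEAST n. \<exists>xs. walk E xs \<and> hd xs = a \<and> last xs = b \<and> length xs = Suc n)
      \<le> length xs - 1"
    using assms by (intro Least_le) auto
  then show ?thesis unfolding graph_dist_def by simp
qed

lemma graph_dist_attained:
  assumes "walk E xs" "hd xs = a" "last xs = b"
  obtains ws where "walk E ws" "hd ws = a" "last ws = b" "real (length ws) = graph_dist E a b + 1"
proof -
  have "xs \<noteq> []" using assms(1) by (simp add: walk_def)
  then have "\<exists>n xs. walk E xs \<and> hd xs = a \<and> last xs = b \<and> length xs = Suc n"
    using assms by (intro exI[of _ "length xs - 1"] exI[of _ xs]) auto
  from LeastI_ex[OF this] show thesis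
    using that unfolding graph_dist_def by auto
qed

lemma graph_dist_nonneg: "0 \<le> graph_dist E a b"
  by (simp add: graph_dist_def)

lemma graph_dist_refl: "graph_dist E a a = 0"
  using graph_dist_le_length[of E "[a]" a a] graph_dist_nonneg[of E a a]
  by (simp add: walk_iff_successively)

lemma graph_dist_edge: "E a b \<Longrightarrow> graph_dist E a b \<le> 1"
  using graph_dist_le_length[of E "[a, b]" a b] by (simp add: walk_iff_successively)

lemma graph_dist_sym:
  assumes "\<And>x y. E x y \<Longrightarrow> E y x"
  shows "graph_dist E a b = graph_dist E b a"
proof -
  have "successively (\<lambda>x y. E y x) xs \<longleftrightarrow> successively E xs" for xs
    using successively_mono[of _ xs] assms by metis
  then have rev: "walk E (rev xs) \<longleftrightarrow> walk E xs" for xs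
    by (simp add: walk_iff_successively)
  have reverse: "\<exists>xs. walk E xs \<and> hd xs = v \<and> last xs = u \<and> length xs = Suc n"
    if "walk E xs" "hd xs = u" "last xs = v" "length xs = Suc n" for xs u v n
    using that by (intro exI[of _ "rev xs"]) (auto simp: rev hd_rev last_rev)
  have "(\<exists>xs. walk E xs \<and> hd xs = a \<and> last xs = b \<and> length xs = Suc n) \<longleftrightarrow>
        (\<exists>xs. walk E xs \<and> hd xs = b \<and> last xs = a \<and> length xs = Suc n)" for n
    using reverse by blast
  then show ?thesis unfolding graph_dist_def by simp
qed

lemma walk_append_tl:
  assumes "walk E xs" "walk E ys" "last xs = hd ys"
  shows "walk E (xs @ tl ys)" "last (xs @ tl ys) = last ys"
proof -
  obtain y ys' where ys: "ys = y # ys'" using assms(2) by (cases ys) (auto simp: walk_def)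
  have "successively E (y # ys')" "xs \<noteq> []" "last xs = y"
    using assms ys by (simp_all add: walk_iff_successively)
  then show "walk E (xs @ tl ys)"
    using assms(1) ys
    by (auto simp: walk_iff_successively successively_append_iff successively_Cons)
  show "last (xs @ tl ys) = last ys"
    using \<open>last xs = y\<close> ys by (cases "ys' = []") simp_all
qed

lemma walk_remdups_adj:
  assumes "successively (\<lambda>a b. a = b \<or> E a b) xs" "xs \<noteq> []"
  shows "walk E (remdups_adj xs)"
proof -
  have "successively (\<lambda>a b. a = b \<or> E a b) (remdups_adj xs)"
    using assms(1) by (rule successively_remdups_adjI)
  then have "successively E (remdups_adj xs)"
    using remdups_adj_adjacent[of _ xs] unfolding successively_conv_nth by blast
  then show ?thesis using assms(2) by (simp add: walk_iff_successively)
qed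

lemma graph_dist_triangle:
  assumes "graph_connected V E" "a \<in> V" "b \<in> V" "c \<in> V"
  shows "graph_dist E a c \<le> graph_dist E a b + graph_dist E b c"
proof -
  obtain xs ys where xs: "walk E xs" "hd xs = a" "last xs = b"
    and ys: "walk E ys" "hd ys = b" "last ys = c"
    using assms unfolding graph_connected_def by meson
  obtain ws1 where
    ws1: "walk E ws1" "hd ws1 = a" "last ws1 = b" "real (length ws1) = graph_dist E a b + 1"
    using graph_dist_attained[OF xs] .
  obtain ws2 where
    ws2: "walk E ws2" "hd ws2 = b" "last ws2 = c" "real (length ws2) = graph_dist E b c + 1"
    using graph_dist_attained[OF ys] .
  have "ws1 \<noteq> []" "ws2 \<noteq> []" using ws1(1) ws2(1) by (auto simp: walk_def)
  then have "graph_dist E a c \<le> real (length (ws1 @ tl ws2) - 1)"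
    using walk_append_tl[OF ws1(1) ws2(1)] ws1(2,3) ws2(2,3)
    by (intro graph_dist_le_length) auto
  also have "\<dots> = (real (length ws1) - 1) + (real (length ws2) - 1)"
    using \<open>ws1 \<noteq> []\<close> \<open>ws2 \<noteq> []\<close> by (cases ws1; cases ws2) auto
  also have "\<dots> = graph_dist E a b + graph_dist E b c"
    using ws1(4) ws2(4) by simp
  finally show ?thesis .
qed

section \<open>Compact generation from coarse connectedness\<close>

lemma add_subgroup_contains_chain_end:
  fixes xs :: "'a::group_add list"
  assumes "add_subgroup H" "successively R xs" "xs \<noteq> []" "hd xs \<in> H"
    and steps: "\<And>u v. R u v \<Longrightarrow> -u + v \<in> H"
  shows "last xs \<in> H"
  using assms(2-4)
proof (induction xs rule: induct_list012)
  case (3 x y zs)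
  have "y = x + (-x + y)" by (simp add: add.assoc[symmetric])
  moreover have "-x + y \<in> H" using "3.prems"(1) steps by simp
  moreover have "x \<in> H" using "3.prems"(3) by simp
  ultimately have "y \<in> H" using assms(1) unfolding add_subgroup_def by metis
  with 3 show ?case by simp
qed simp_all

lemma compactly_generated_if_chain_steps_in_compact:
  fixes d :: "'a::topological_group_add \<Rightarrow> 'a \<Rightarrow> real"
  assumes "b_chain_connected d b" "compact K" and steps: "\<And>x y. d x y \<le> b \<Longrightarrow> -x + y \<in> K"
  shows "compactly_generated TYPE('a)"
  unfolding compactly_generated_def
proof (intro exI conjI)
  have "x \<in> H" if H: "add_subgroup H" "K \<subseteq> H" for x H
  proof -
    obtain xs where xs: "xs \<in> b_chains d b 0 x"
      using assms(1) unfolding b_chain_connected_def by blast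
    have "last xs \<in> H"
    proof (rule add_subgroup_contains_chain_end[OF H(1)])
      show "-u + v \<in> H" if "d u v \<le> b" for u v using steps[OF that] H(2) by blast
      show "hd xs \<in> H" using xs H(1) by (simp add: mem_b_chains_iff add_subgroup_def)
    qed (use xs in \<open>auto simp: mem_b_chains_iff\<close>)
    then show "x \<in> H" using xs by (simp add: mem_b_chains_iff)
  qed
  then show "generated_subgroup K = UNIV" unfolding generated_subgroup_def by blast
qed fact

lemma left_invariant_dist_eq:
  assumes "left_invariant d"
  shows "d x y = d 0 (-x + y)"
  using assms unfolding left_invariant_def by (metis add.right_neutral add_minus_cancel)

lemma compactly_generated_if_proper_left_invariant:
  fixes d :: "'a::topological_group_add \<Rightarrow> 'a \<Rightarrow> real"
  assumes "left_invariant d" "proper_metric d" "b_chain_connected d b"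
  shows "compactly_generated TYPE('a)"
proof (rule compactly_generated_if_chain_steps_in_compact[OF assms(3)])
  show "compact {z. d 0 z \<le> b}" using assms(2) unfolding proper_metric_def by blast
  show "-x + y \<in> {z. d 0 z \<le> b}" if "d x y \<le> b" for x y
    using that left_invariant_dist_eq[OF assms(1), of x y] by simp
qed

lemma quasi_isometryE:
  assumes "quasi_isometry UNIV d Y e F"
  obtains C where "C > 0" "\<And>x. F x \<in> Y"
    "\<And>x y. d x y / C - C \<le> e (F x) (F y)" "\<And>x y. e (F x) (F y) \<le> C * d x y + C"
    "\<And>z. z \<in> Y \<Longrightarrow> \<exists>x. e z (F x) \<le> C"
proof -
  obtain C where "F ` UNIV \<subseteq> Y" "C > 0"
    "\<forall>x\<in>UNIV. \<forall>y\<in>UNIV. d x y / C - C \<le> e (F x) (F y) \<and> e (F x) (F y) \<le> C * d x y + C"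
    "\<forall>z\<in>Y. \<exists>x\<in>UNIV. e z (F x) \<le> C"
    using assms unfolding quasi_isometry_def by blast
  then show thesis by (intro that[of C]) auto
qed

lemma quasi_isometric_to_graph_coarse_inverse:
  assumes "is_graph V E" "graph_connected V E" "quasi_isometry UNIV d V (graph_dist E) F"
  obtains p b where "\<And>x. d x (p (F x)) \<le> b" "\<And>x. d (p (F x)) x \<le> b"
    "\<And>u v. E u v \<Longrightarrow> d (p u) (p v) \<le> b"
proof -
  obtain C where C: "C > 0" and FV: "\<And>x. F x \<in> V"
    and lower: "\<And>x y. d x y / C - C \<le> graph_dist E (F x) (F y)"
    and dense: "\<And>z. z \<in> V \<Longrightarrow> \<exists>x. graph_dist E z (F x) \<le> C"
    using quasi_isometryE[OF assms(3)] by metis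
  have sym: "graph_dist E u v = graph_dist E v u" for u v
    using assms(1) by (intro graph_dist_sym) (simp add: is_graph_def)
  have d_le: "d x y \<le> C * graph_dist E (F x) (F y) + C * C" for x y
    using lower[of x y] C by (simp add: field_simps)
  define p where "p z = (SOME x. graph_dist E z (F x) \<le> C)" for z
  have p: "graph_dist E z (F (p z)) \<le> C" if "z \<in> V" for z
    unfolding p_def using dense[OF that] by (rule someI_ex)
  define b where "b = 3 * C * C + C"
  have b: "C * C + C * C \<le> b" "0 \<le> C * C" using C unfolding b_def by simp_all
  have ends: "d x (p (F x)) \<le> b" "d (p (F x)) x \<le> b" for x
  proof -
    have "graph_dist E (F x) (F (p (F x))) \<le> C" "graph_dist E (F (p (F x))) (F x) \<le> C"
      using p[OF FV] sym by metis+
    then have "C * graph_dist E (F x) (F (p (F x))) \<le> C * C"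
      "C * graph_dist E (F (p (F x))) (F x) \<le> C * C"
      using C by (simp_all add: mult_left_mono)
    then show "d x (p (F x)) \<le> b" "d (p (F x)) x \<le> b"
      using d_le[of x "p (F x)"] d_le[of "p (F x)" x] b by linarith+
  qed
  have "d (p u) (p v) \<le> b" if "E u v" for u v
  proof -
    have uv: "u \<in> V" "v \<in> V" using that assms(1) unfolding is_graph_def by auto
    have "graph_dist E (F (p u)) (F (p v)) \<le>
          graph_dist E (F (p u)) u + graph_dist E u v + graph_dist E v (F (p v))"
      using graph_dist_triangle[OF assms(2) FV[of "p u"] uv(1) FV[of "p v"]]
        graph_dist_triangle[OF assms(2) uv FV[of "p v"]]
      by linarith
    also have "\<dots> \<le> 2 * C + 1"
      using p[OF uv(1)] p[OF uv(2)] sym graph_dist_edge[of E, OF that] by (simp add: sym)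
    finally have "C * graph_dist E (F (p u)) (F (p v)) \<le> C * (2 * C + 1)"
      using C by (simp add: mult_left_mono)
    then show ?thesis using d_le[of "p u" "p v"] unfolding b_def by (simp add: algebra_simps)
  qed
  with ends show thesis by (rule that)
qed

lemma b_chain_connected_if_quasi_isometric_to_graph:
  assumes "is_graph V E" "graph_connected V E" "quasi_isometry UNIV d V (graph_dist E) F"
  shows "\<exists>b. b_chain_connected d b"
proof -
  obtain p b where ends: "\<And>x. d x (p (F x)) \<le> b" "\<And>x. d (p (F x)) x \<le> b"
    and step: "\<And>u v. E u v \<Longrightarrow> d (p u) (p v) \<le> b"
    by (rule quasi_isometric_to_graph_coarse_inverse[OF assms]) (rule that)
  have "x # map p ws @ [y] \<in> b_chains d b x y"
    if ws: "walk E ws" "hd ws = F x" "last ws = F y" for ws x y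
  proof -
    have "ws \<noteq> []" "successively E ws" using ws(1) by (simp_all add: walk_iff_successively)
    have "successively (\<lambda>u v. d u v \<le> b) (map p ws)"
      unfolding successively_map using \<open>successively E ws\<close>
      by (rule successively_mono) (simp add: step)
    then show ?thesis
      using \<open>ws \<noteq> []\<close> ends[of x] ends[of y] ws(2,3)
      by (simp add: mem_b_chains_iff successively_append_iff successively_Cons hd_map last_map)
  qed
  moreover have "F x \<in> V" for x
    using assms(3) unfolding quasi_isometry_def by blast
  ultimately show ?thesis
    using assms(2) unfolding b_chain_connected_def graph_connected_def by blast
qed

lemma compactly_generated_if_quasi_isometric_to_graph:
  fixes d :: "'a::topological_group_add \<Rightarrow> 'a \<Rightarrow> real"
  assumes "left_invariant d" "proper_metric d" "qi_to_bounded_degree_graph d"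
  shows "compactly_generated TYPE('a)"
proof -
  obtain V E F where
    "is_graph V E" "graph_connected V E" "quasi_isometry UNIV d V (graph_dist E) F"
    using assms(3) unfolding qi_to_bounded_degree_graph_def by blast
  then obtain b where "b_chain_connected d b"
    using b_chain_connected_if_quasi_isometric_to_graph by blast
  then show ?thesis by (rule compactly_generated_if_proper_left_invariant[OF assms(1,2)])
qed

lemma locally_compact_compact_nbhd:
  fixes x :: "'a::topological_space"
  assumes "locally_compact_space (euclidean :: 'a topology)"
  obtains U K :: "'a set" where "open U" "compact K" "x \<in> U" "U \<subseteq> K"
  using assms unfolding locally_compact_space_def by (auto simp: openin_open) metis

lemma left_translate_eq_vimage:
  fixes k :: "'a::group_add"
  shows "(+) k ` U = (\<lambda>y. -k + y) -` U"
proof (rule set_eqI, rule iffI)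
  fix y assume "y \<in> (\<lambda>y. -k + y) -` U"
  then have "k + (-k + y) \<in> (+) k ` U" by blast
  then show "y \<in> (+) k ` U" by (simp add: add.assoc[symmetric])
qed (auto simp: add.assoc[symmetric])

lemma open_left_translate:
  fixes k :: "'a::topological_group_add"
  shows "open U \<Longrightarrow> open ((+) k ` U)"
  unfolding left_translate_eq_vimage by (intro open_vimage continuous_intros)

lemma compact_left_translate:
  fixes k :: "'a::topological_monoid_add"
  shows "compact K \<Longrightarrow> compact ((+) k ` K)"
  by (intro compact_continuous_image continuous_intros)

lemma compact_finite_translates_cover:
  fixes U :: "'a::topological_group_add set"
  assumes "compact K" "open U" "0 \<in> U"
  obtains F where "F \<subseteq> K" "finite F" "K \<subseteq> (\<Union>k\<in>F. (+) k ` U)"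
proof (rule compactE_image[OF assms(1)])
  show "open ((+) k ` U)" for k using assms(2) by (rule open_left_translate)
  have "k \<in> (+) k ` U" for k using assms(3) image_eqI[of k "(+) k" 0] by simp
  then show "K \<subseteq> (\<Union>k\<in>K. (+) k ` U)" by blast
qed (rule that)

lemma greedy_sequence:
  assumes "\<And>F. finite F \<Longrightarrow> F \<subseteq> A \<Longrightarrow> \<exists>a\<in>A. \<forall>x\<in>F. R x a"
  obtains a :: "nat \<Rightarrow> 'a" where "\<And>n. a n \<in> A" "\<And>i j. i < j \<Longrightarrow> R (a i) (a j)"
proof -
  define P where "P a n x \<longleftrightarrow> x \<in> A \<and> (\<forall>i<n. R (a i) x)" for a :: "nat \<Rightarrow> 'a" and n x
  have "\<exists>a. \<forall>n. P a n (a n)"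
  proof (rule dependent_wellorder_choice)
    fix a :: "nat \<Rightarrow> 'a" and n assume "\<And>i. i < n \<Longrightarrow> P a i (a i)"
    then have "a ` {..<n} \<subseteq> A" unfolding P_def by auto
    then show "\<exists>x. P a n x" using assms[of "a ` {..<n}"] unfolding P_def by auto
  qed (simp add: P_def)
  then show thesis using that unfolding P_def by blast
qed

lemma eventually_not_in_compact_if_sparse:
  fixes a :: "nat \<Rightarrow> 'a::topological_group_add"
  assumes "open U" "0 \<in> U" "compact K"
    and sparse: "\<And>k i j. a i \<in> (+) k ` U \<Longrightarrow> a j \<in> (+) k ` U \<Longrightarrow> i = j"
  shows "eventually (\<lambda>n. a n \<notin> K) sequentially"
proof -
  \<comment> \<open>Finitely many translates of \<open>U\<close> cover \<open>K\<close>, and each contains at most one term.\<close>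
  obtain Fin where Fin: "finite Fin" "K \<subseteq> (\<Union>k\<in>Fin. (+) k ` U)"
    using compact_finite_translates_cover[OF assms(3,1,2)] by metis
  define g where "g n = (SOME k. k \<in> Fin \<and> a n \<in> (+) k ` U)" for n
  have g: "g n \<in> Fin \<and> a n \<in> (+) (g n) ` U" if "a n \<in> K" for n
  proof -
    have "\<exists>k. k \<in> Fin \<and> a n \<in> (+) k ` U" using that Fin(2) by blast
    then show ?thesis unfolding g_def by (rule someI_ex)
  qed
  have "inj_on g {n. a n \<in> K}"
  proof (rule inj_onI)
    fix i j assume "i \<in> {n. a n \<in> K}" "j \<in> {n. a n \<in> K}" "g i = g j"
    then have "a i \<in> (+) (g i) ` U" "a j \<in> (+) (g i) ` U" using g[of i] g[of j] by auto
    then show "i = j" by (rule sparse)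
  qed
  moreover have "g ` {n. a n \<in> K} \<subseteq> Fin" using g by blast
  ultimately have "finite {n. a n \<in> K}" using Fin(1) inj_on_finite by blast
  then show ?thesis
    unfolding cofinite_eq_sequentially[symmetric] eventually_cofinite by simp
qed

lemma not_covered_by_finitely_many_translates:
  fixes A T :: "'a::topological_group_add set"
  assumes "\<nexists>K. compact K \<and> A \<subseteq> K" "compact T" "finite F"
  shows "\<exists>a\<in>A. \<forall>x\<in>F. -x + a \<notin> T"
proof (rule ccontr)
  assume "\<not> (\<exists>a\<in>A. \<forall>x\<in>F. -x + a \<notin> T)"
  then have far: "\<forall>a\<in>A. \<exists>x\<in>F. -x + a \<in> T" by blast
  have "A \<subseteq> (\<Union>x\<in>F. (+) x ` T)"
  proof
    fix a assume "a \<in> A"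
    then obtain x where "x \<in> F" "-x + a \<in> T" using far by blast
    then have "x + (-x + a) \<in> (\<Union>x\<in>F. (+) x ` T)" by blast
    then show "a \<in> (\<Union>x\<in>F. (+) x ` T)" by (simp add: add.assoc[symmetric])
  qed
  moreover have "compact (\<Union>x\<in>F. (+) x ` T)"
    using assms(2,3) by (intro compact_UN compact_left_translate)
  ultimately show False using assms(1) by blast
qed

lemma escaping_sequence_if_not_relatively_compact:
  fixes A :: "'a::topological_group_add set"
  assumes "locally_compact_space (euclidean :: 'a topology)"
    and not_rc: "\<nexists>K. compact K \<and> A \<subseteq> K"
  obtains a :: "nat \<Rightarrow> 'a"
  where "\<And>n. a n \<in> A" "\<And>K. compact K \<Longrightarrow> eventually (\<lambda>n. a n \<notin> K) sequentially"
proof -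
  obtain U L :: "'a set" where U: "open U" "compact L" "0 \<in> U" "U \<subseteq> L"
    using assms(1) by (rule locally_compact_compact_nbhd)
  \<comment> \<open>\<open>T\<close> contains \<open>-U + U\<close>, so a \<open>T\<close>-separated sequence meets each translate of \<open>U\<close> at most once.\<close>
  define T where "T = (\<lambda>p. - fst p + snd p) ` (L \<times> L)"
  have "compact T" unfolding T_def using U(2)
    by (intro compact_continuous_image compact_Times continuous_intros)
  have step: "\<exists>a\<in>A. \<forall>x\<in>F. -x + a \<notin> T" if "finite F" "F \<subseteq> A" for F
    using not_rc \<open>compact T\<close> that(1) by (rule not_covered_by_finitely_many_translates)
  obtain a :: "nat \<Rightarrow> 'a" where a: "\<And>n. a n \<in> A" "\<And>i j. i < j \<Longrightarrow> -a i + a j \<notin> T"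
    using greedy_sequence[OF step] by blast
  have sparse: "i = j" if ij: "a i \<in> (+) k ` U" "a j \<in> (+) k ` U" for k i j
  proof -
    obtain u v where uv: "u \<in> U" "v \<in> U" "a i = k + u" "a j = k + v" using ij by blast
    have "-a i + a j = -u + v" "-a j + a i = -v + u"
      unfolding uv(3,4) by (simp_all add: minus_add add.assoc[symmetric])
    moreover have "-u + v \<in> T" "-v + u \<in> T"
      unfolding T_def using uv(1,2) U(4)
      by (intro rev_image_eqI[of "(u, v)"] rev_image_eqI[of "(v, u)"]; auto)+
    ultimately show "i = j"
      using a(2)[of i j] a(2)[of j i] by (cases i j rule: linorder_cases) auto
  qed
  show thesis
  proof (rule that)
    show "a n \<in> A" for n by (rule a(1))
    show "eventually (\<lambda>n. a n \<notin> K) sequentially" if "compact K" for K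
      using U(1,3) that sparse by (rule eventually_not_in_compact_if_sparse)
  qed
qed

lemma uniform_metricD:
  assumes "uniform_metric d"
  shows "filterlim (\<lambda>n. d (g n) (h n)) at_top sequentially \<longleftrightarrow>
         (\<forall>K. compact K \<longrightarrow> eventually (\<lambda>n. - g n + h n \<notin> K) sequentially)"
  using assms unfolding uniform_metric_def by blast

lemma uniform_metric_differences_relatively_compact:
  fixes d :: "'a::topological_group_add \<Rightarrow> 'a \<Rightarrow> real"
  assumes lc: "locally_compact_space (euclidean :: 'a topology)" and "uniform_metric d"
  obtains K where "compact K" "\<And>x y. d x y \<le> b \<Longrightarrow> -x + y \<in> K"
proof -
  define D where "D = {-x + y | x y. d x y \<le> b}"
  have "\<exists>K. compact K \<and> D \<subseteq> K"
  proof (rule ccontr)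
    assume "\<nexists>K. compact K \<and> D \<subseteq> K"
    then obtain a :: "nat \<Rightarrow> 'a" where
      a: "\<And>n. a n \<in> D" "\<And>K. compact K \<Longrightarrow> eventually (\<lambda>n. a n \<notin> K) sequentially"
      by (rule escaping_sequence_if_not_relatively_compact[OF lc]) (rule that)
    have pairs: "\<forall>n. \<exists>p. a n = - fst p + snd p \<and> d (fst p) (snd p) \<le> b"
    proof
      fix n
      obtain x y where "a n = -x + y" "d x y \<le> b" using a(1)[of n] unfolding D_def by blast
      then show "\<exists>p. a n = - fst p + snd p \<and> d (fst p) (snd p) \<le> b"
        by (intro exI[of _ "(x, y)"]) simp
    qed
    obtain p where p: "\<forall>n. a n = - fst (p n) + snd (p n) \<and> d (fst (p n)) (snd (p n)) \<le> b"
      using choice[OF pairs] by blast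
    have "\<forall>K. compact K \<longrightarrow> eventually (\<lambda>n. - fst (p n) + snd (p n) \<notin> K) sequentially"
      using a(2) p by simp
    then have "filterlim (\<lambda>n. d (fst (p n)) (snd (p n))) at_top sequentially"
      using uniform_metricD[OF assms(2), of "\<lambda>n. fst (p n)" "\<lambda>n. snd (p n)"] by simp
    then have "eventually (\<lambda>n. b + 1 \<le> d (fst (p n)) (snd (p n))) sequentially"
      unfolding filterlim_at_top by blast
    then obtain n where "b + 1 \<le> d (fst (p n)) (snd (p n))"
      unfolding eventually_sequentially by blast
    moreover have "d (fst (p n)) (snd (p n)) \<le> b" using p by blast
    ultimately show False by linarith
  qed
  then obtain K where "compact K" "D \<subseteq> K" by blast
  then show thesis using that unfolding D_def by blast
qed

lemma compactly_generated_if_uniform_chain_connected: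
  fixes d :: "'a::topological_group_add \<Rightarrow> 'a \<Rightarrow> real"
  assumes "locally_compact_space (euclidean :: 'a topology)"
    and "uniform_metric d" "b_chain_connected d b"
  shows "compactly_generated TYPE('a)"
proof -
  obtain K where "compact K" "\<And>x y. d x y \<le> b \<Longrightarrow> -x + y \<in> K"
    by (rule uniform_metric_differences_relatively_compact[OF assms(1,2)]) (rule that)
  then show ?thesis by (rule compactly_generated_if_chain_steps_in_compact[OF assms(3)])
qed

section \<open>The word metric of a compact generating neighbourhood\<close>

primrec sumset_power :: "'a::monoid_add set \<Rightarrow> nat \<Rightarrow> 'a set" where
  "sumset_power S 0 = {0}"
| "sumset_power S (Suc n) = {s + a | s a. s \<in> S \<and> a \<in> sumset_power S n}"

lemma sumset_power_1 [simp]: "sumset_power S 1 = S"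
  by auto

lemma sumset_power_mono:
  assumes "(0::'a::monoid_add) \<in> S" "m \<le> n"
  shows "sumset_power S m \<subseteq> sumset_power S n"
proof -
  have "sumset_power S n \<subseteq> sumset_power S (Suc n)" for n
  proof (induction n)
    case 0
    then show ?case using assms(1) by force
  next
    case (Suc n)
    show ?case
    proof
      fix x assume "x \<in> sumset_power S (Suc n)"
      then obtain s a where "x = s + a" "s \<in> S" "a \<in> sumset_power S n" by auto
      moreover have "a \<in> sumset_power S (Suc n)" using Suc \<open>a \<in> sumset_power S n\<close> by blast
      ultimately show "x \<in> sumset_power S (Suc (Suc n))" by (subst sumset_power.simps(2)) blast
    qed
  qed
  then show ?thesis using lift_Suc_mono_le[of "sumset_power S"] assms(2) by blast
qed

lemma sumset_power_add:
  "(a::'a::monoid_add) \<in> sumset_power S m \<Longrightarrow> b \<in> sumset_power S n \<Longrightarrow>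
     a + b \<in> sumset_power S (m + n)"
proof (induction m arbitrary: a)
  case (Suc m)
  then obtain s a' where "a = s + a'" "s \<in> S" "a' \<in> sumset_power S m" by auto
  with Suc.IH[of a'] Suc.prems(2) show ?case by (auto simp: add.assoc)
qed simp

lemma sumset_power_uminus:
  assumes "\<And>s. s \<in> S \<Longrightarrow> - s \<in> S"
  shows "(a::'a::group_add) \<in> sumset_power S n \<Longrightarrow> - a \<in> sumset_power S n"
proof (induction n arbitrary: a)
  case (Suc n)
  then obtain s a' where a: "a = s + a'" "s \<in> S" "a' \<in> sumset_power S n" by auto
  have "-a' + -s \<in> sumset_power S (n + 1)"
    using sumset_power_add[of "-a'" S n "-s" 1] Suc.IH[OF a(3)] assms[OF a(2)] by simp
  then show ?case using a(1) by (simp add: minus_add)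
qed simp

lemma compact_sumset_power:
  assumes "compact (S::'a::topological_monoid_add set)"
  shows "compact (sumset_power S n)"
proof (induction n)
  case (Suc n)
  have "sumset_power S (Suc n) = (\<lambda>p. fst p + snd p) ` (S \<times> sumset_power S n)" by force
  then show ?case
    using assms Suc by (simp add: compact_continuous_image compact_Times continuous_intros)
qed simp

lemma add_subgroup_sumset_powers:
  assumes "\<And>s. s \<in> S \<Longrightarrow> - s \<in> S"
  shows "add_subgroup (\<Union>n. sumset_power S n :: 'a::group_add set)"
  unfolding add_subgroup_def
proof (intro conjI ballI)
  show "0 \<in> (\<Union>n. sumset_power S n)" using sumset_power.simps(1) by blast
  fix x y assume "x \<in> (\<Union>n. sumset_power S n)" "y \<in> (\<Union>n. sumset_power S n)"
  then show "x + y \<in> (\<Union>n. sumset_power S n)" using sumset_power_add by blast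
next
  fix x assume "x \<in> (\<Union>n. sumset_power S n)"
  then show "-x \<in> (\<Union>n. sumset_power S n)" using sumset_power_uminus[OF assms] by blast
qed

lemma sumset_power_path:
  fixes S :: "'a::group_add set"
  assumes "-x + y \<in> sumset_power S n"
  obtains xs where "hd xs = x" "last xs = y" "length xs = Suc n"
    "successively (\<lambda>u v. -u + v \<in> S) xs"
  using assms
proof (induction n arbitrary: x thesis)
  case 0
  then have "-x + y = 0" by simp
  then have "y = x" by (metis add.right_neutral add_minus_cancel)
  with "0.prems"(1)[of "[x]"] show ?case by simp
next
  case (Suc n)
  then obtain s a where sa: "-x + y = s + a" "s \<in> S" "a \<in> sumset_power S n" by auto
  have "-(x + s) + y = a" unfolding minus_add add.assoc sa(1) by simp
  then obtain xs where xs: "hd xs = x + s" "last xs = y" "length xs = Suc n"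
    "successively (\<lambda>u v. -u + v \<in> S) xs"
    using Suc.IH sa(3) by metis
  have "xs \<noteq> []" using xs(3) by auto
  then show ?case
    using Suc.prems(1)[of "x # xs"] xs sa(2) by (simp add: successively_Cons add.assoc[symmetric])
qed

definition word_length :: "'a::monoid_add set \<Rightarrow> 'a \<Rightarrow> nat" where
  "word_length S g = (LEAST n. g \<in> sumset_power S n)"

definition word_metric :: "'a::group_add set \<Rightarrow> 'a \<Rightarrow> 'a \<Rightarrow> real" where
  "word_metric S x y = real (word_length S (-x + y))"

locale compact_generating_nbhd =
  fixes S :: "'a::topological_group_add set"
  assumes compact: "compact S"
    and zero_in_interior: "0 \<in> interior S"
    and symmetric: "\<And>s. s \<in> S \<Longrightarrow> - s \<in> S"
    and generating: "\<And>g. \<exists>n. g \<in> sumset_power S n"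
begin

lemma zero_mem: "0 \<in> S"
  using zero_in_interior interior_subset by blast

lemma mem_sumset_power_iff: "g \<in> sumset_power S n \<longleftrightarrow> word_length S g \<le> n"
proof
  show "word_length S g \<le> n" if "g \<in> sumset_power S n"
    unfolding word_length_def using that by (rule Least_le)
  have "g \<in> sumset_power S (word_length S g)"
    unfolding word_length_def using generating by (rule LeastI_ex)
  then show "g \<in> sumset_power S n" if "word_length S g \<le> n"
    using sumset_power_mono[OF zero_mem that] by blast
qed

lemma word_length_eq_0_iff [simp]: "word_length S g = 0 \<longleftrightarrow> g = 0"
  using mem_sumset_power_iff[of g 0] by auto

lemma word_length_zero [simp]: "word_length S 0 = 0"
  by simp

lemma word_length_add: "word_length S (a + b) \<le> word_length S a + word_length S b"
  using sumset_power_add mem_sumset_power_iff by blast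

lemma word_length_uminus [simp]: "word_length S (- g) = word_length S g"
  using sumset_power_uminus[OF symmetric] mem_sumset_power_iff
  by (metis le_antisym minus_minus order_refl)

lemma word_length_le_1: "s \<in> S \<Longrightarrow> word_length S s \<le> 1"
  using mem_sumset_power_iff[of s 1] by simp

lemma word_metric_le_iff: "word_metric S x y \<le> real n \<longleftrightarrow> -x + y \<in> sumset_power S n"
  by (simp add: word_metric_def mem_sumset_power_iff)

lemma is_metric_word_metric: "is_metric (word_metric S)"
  unfolding is_metric_def word_metric_def
proof (intro conjI allI)
  fix x y z :: 'a
  have "-x + y = 0 \<longleftrightarrow> x = y" by (metis add.right_neutral add_minus_cancel left_minus)
  then show "real (word_length S (- x + y)) = 0 \<longleftrightarrow> x = y" by simp
  show "real (word_length S (- x + y)) = real (word_length S (- y + x))"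
    using word_length_uminus[of "-x + y"] by (simp add: minus_add)
  have "-x + z = (-x + y) + (-y + z)" by (simp add: add.assoc[symmetric])
  then show "real (word_length S (- x + z)) \<le>
      real (word_length S (- x + y)) + real (word_length S (- y + z))"
    using word_length_add[of "-x + y" "-y + z"] by simp
qed

lemma left_invariant_word_metric: "left_invariant (word_metric S)"
  unfolding left_invariant_def word_metric_def by (simp add: minus_add add.assoc[symmetric])

lemma proper_metric_word_metric: "proper_metric (word_metric S)"
  unfolding proper_metric_def
proof (intro allI)
  fix x :: 'a and r :: real
  show "compact {y. word_metric S x y \<le> r}"
  proof (cases "r \<ge> 0")
    case False
    then have "{y. word_metric S x y \<le> r} = {}" by (auto simp: word_metric_def)
    then show ?thesis by simp
  next
    case True
    have "word_metric S x y \<le> r \<longleftrightarrow> -x + y \<in> sumset_power S (nat \<lfloor>r\<rfloor>)" for y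
      using True by (simp add: word_metric_def mem_sumset_power_iff le_nat_iff le_floor_iff)
    then have "{y. word_metric S x y \<le> r} = (\<lambda>y. -x + y) -` sumset_power S (nat \<lfloor>r\<rfloor>)"
      by auto
    then have "{y. word_metric S x y \<le> r} = (+) x ` sumset_power S (nat \<lfloor>r\<rfloor>)"
      by (simp add: left_translate_eq_vimage)
    then show ?thesis by (simp add: compact_left_translate compact_sumset_power[OF compact])
  qed
qed

lemma compact_subset_sumset_power:
  assumes "compact K"
  obtains m where "K \<subseteq> sumset_power S m"
proof -
  obtain F where F: "finite F" "K \<subseteq> (\<Union>k\<in>F. (+) k ` interior S)"
    using compact_finite_translates_cover[OF assms open_interior zero_in_interior] by metis
  define m where "m = Suc (\<Sum>k\<in>F. word_length S k)"
  have "K \<subseteq> sumset_power S m"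
  proof
    fix y assume "y \<in> K"
    then obtain k s where ks: "k \<in> F" "s \<in> S" "y = k + s" using F(2) interior_subset by blast
    have "word_length S (k + s) \<le> word_length S k + 1"
      using word_length_add[of k s] word_length_le_1[OF ks(2)] by simp
    also have "\<dots> \<le> m"
      unfolding m_def using member_le_sum[OF ks(1), of "word_length S"] F(1) by simp
    finally show "y \<in> sumset_power S m" using ks(3) mem_sumset_power_iff by blast
  qed
  then show thesis by (rule that)
qed

lemma uniform_metric_word_metric: "uniform_metric (word_metric S)"
  unfolding uniform_metric_def
proof (intro conjI allI is_metric_word_metric)
  fix g h :: "nat \<Rightarrow> 'a"
  show "filterlim (\<lambda>n. word_metric S (g n) (h n)) at_top sequentially \<longleftrightarrow>
        (\<forall>K. compact K \<longrightarrow> eventually (\<lambda>n. - g n + h n \<notin> K) sequentially)"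
  proof (intro iffI allI impI)
    fix K :: "'a set"
    assume lim: "filterlim (\<lambda>n. word_metric S (g n) (h n)) at_top sequentially" and "compact K"
    then obtain m where m: "K \<subseteq> sumset_power S m" by (metis compact_subset_sumset_power)
    have "eventually (\<lambda>n. real m + 1 \<le> word_metric S (g n) (h n)) sequentially"
      using lim unfolding filterlim_at_top by blast
    then show "eventually (\<lambda>n. - g n + h n \<notin> K) sequentially"
    proof eventually_elim
      case (elim n)
      then show ?case using m word_metric_le_iff[of "g n" "h n" m] by auto
    qed
  next
    assume escape: "\<forall>K. compact K \<longrightarrow> eventually (\<lambda>n. - g n + h n \<notin> K) sequentially"
    show "filterlim (\<lambda>n. word_metric S (g n) (h n)) at_top sequentially"
      unfolding filterlim_at_top
    proof
      fix Z :: real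
      have "eventually (\<lambda>n. - g n + h n \<notin> sumset_power S (nat \<lceil>Z\<rceil>)) sequentially"
        using escape compact_sumset_power[OF compact] by blast
      then show "eventually (\<lambda>n. Z \<le> word_metric S (g n) (h n)) sequentially"
      proof eventually_elim
        case (elim n)
        then have "real (nat \<lceil>Z\<rceil>) < word_metric S (g n) (h n)"
          using word_metric_le_iff by (meson not_le)
        then show ?case using real_nat_ceiling_ge[of Z] by linarith
      qed
    qed
  qed
qed

lemma word_metric_chain:
  obtains xs where "xs \<in> b_chains (word_metric S) 1 x y"
    "chain_length (word_metric S) xs \<le> word_metric S x y"
proof -
  obtain xs where xs: "hd xs = x" "last xs = y" "length xs = Suc (word_length S (-x + y))"
    "successively (\<lambda>u v. -u + v \<in> S) xs"
    using sumset_power_path mem_sumset_power_iff by blast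
  have "successively (\<lambda>u v. word_metric S u v \<le> 1) xs"
    using xs(4) by (rule successively_mono) (use word_metric_le_iff[of _ _ 1] in simp)
  moreover have "xs \<noteq> []" using xs(3) by auto
  ultimately show thesis
    using that[of xs] chain_length_le[of "word_metric S" 1 xs] xs(1-3)
    by (simp add: mem_b_chains_iff word_metric_def)
qed

lemma chain_dist_word_metric: "chain_dist (word_metric S) 1 x y = word_metric S x y"
proof -
  obtain xs where xs: "xs \<in> b_chains (word_metric S) 1 x y"
    "chain_length (word_metric S) xs \<le> word_metric S x y"
    by (rule word_metric_chain)
  have lower: "word_metric S x y \<le> chain_length (word_metric S) ys"
    if "ys \<in> b_chains (word_metric S) 1 x y" for ys
    using dist_le_chain_length[OF is_metric_word_metric, of ys] that
    by (auto simp: mem_b_chains_iff)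
  have "chain_dist (word_metric S) 1 x y \<le> chain_length (word_metric S) xs"
    unfolding chain_dist_def using xs(1) lower by (intro cInf_lower bdd_belowI2) auto
  moreover have "word_metric S x y \<le> chain_dist (word_metric S) 1 x y"
    unfolding chain_dist_def using xs(1) lower by (intro cInf_greatest) auto
  ultimately show ?thesis using xs(2) by linarith
qed

lemma b_chain_connected_word_metric: "b_chain_connected (word_metric S) 1"
  unfolding b_chain_connected_def using word_metric_chain by blast

lemma quasi_geodesic_word_metric: "quasi_geodesic (word_metric S)"
proof -
  have "quasi_isometry UNIV (word_metric S) UNIV (chain_dist (word_metric S) 1) id"
    unfolding quasi_isometry_def chain_dist_word_metric
  proof (intro conjI exI[of _ "1::real"] ballI)
    show "\<exists>x\<in>UNIV. word_metric S z (id x) \<le> 1" for z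
      by (intro bexI[of _ z]) (simp_all add: word_metric_def)
  qed auto
  then show ?thesis
    unfolding quasi_geodesic_def using b_chain_connected_word_metric
    by (intro exI[of _ "1::real"] conjI) simp_all
qed

lemma coarsely_geodesic_word_metric: "coarsely_geodesic (word_metric S)"
  unfolding coarsely_geodesic_def
proof (rule exI[of _ "1::real"], intro conjI allI)
  show "\<exists>R'. \<forall>x y. word_metric S x y \<le> R \<longrightarrow> chain_dist (word_metric S) 1 x y \<le> R'" for R
    by (intro exI[of _ R]) (simp add: chain_dist_word_metric)
qed (simp_all add: b_chain_connected_word_metric)

end

lemma compact_generating_nbhd_exists:
  fixes K :: "'a::topological_group_add set"
  assumes "locally_compact_space (euclidean :: 'a topology)"
    and "compact K" "generated_subgroup K = UNIV"
  obtains S :: "'a set" where "compact_generating_nbhd S"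
proof -
  obtain U L :: "'a set" where U: "open U" "compact L" "0 \<in> U" "U \<subseteq> L"
    using assms(1) by (rule locally_compact_compact_nbhd)
  define S where "S = K \<union> uminus ` K \<union> L \<union> uminus ` L"
  have "compact S" unfolding S_def using assms(2) U(2)
    by (intro compact_Un compact_continuous_image continuous_intros) auto
  moreover have "0 \<in> interior S"
    using interior_maximal[of U S] U unfolding S_def by blast
  moreover have symmetric: "-s \<in> S" if "s \<in> S" for s using that unfolding S_def by auto
  moreover have "g \<in> (\<Union>n. sumset_power S n)" for g
  proof -
    have "K \<subseteq> (\<Union>n. sumset_power S n)" using sumset_power_1[of S] unfolding S_def by blast
    then have "generated_subgroup K \<subseteq> (\<Union>n. sumset_power S n)"
      using add_subgroup_sumset_powers[OF symmetric] unfolding generated_subgroup_def by blast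
    then show ?thesis using assms(3) by blast
  qed
  ultimately have "compact_generating_nbhd S" by unfold_locales blast+
  then show thesis by (rule that)
qed

section \<open>A bounded-degree graph quasi-isometric to the word metric\<close>

definition separated :: "('a \<Rightarrow> 'a \<Rightarrow> real) \<Rightarrow> real \<Rightarrow> 'a set \<Rightarrow> bool" where
  "separated d r N \<longleftrightarrow> (\<forall>x\<in>N. \<forall>y\<in>N. x \<noteq> y \<longrightarrow> r \<le> d x y)"

lemma maximal_separated_set:
  assumes "is_metric d" "r > 0"
  obtains N where "separated d r N" "\<And>g. \<exists>n\<in>N. d n g < r"
proof -
  have "\<exists>M\<in>{N. separated d r N}. \<forall>N\<in>{N. separated d r N}. M \<subseteq> N \<longrightarrow> N = M"
  proof (rule Zorn_Lemma, intro ballI)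
    fix C assume C: "C \<in> chains {N. separated d r N}"
    show "\<Union>C \<in> {N. separated d r N}"
      unfolding mem_Collect_eq separated_def
    proof (intro ballI impI)
      fix x y assume xy: "x \<in> \<Union>C" "y \<in> \<Union>C" "x \<noteq> y"
      then obtain N1 N2 where N: "N1 \<in> C" "N2 \<in> C" "x \<in> N1" "y \<in> N2" by blast
      have "N1 \<subseteq> N2 \<or> N2 \<subseteq> N1" using C N unfolding chains_def chain_subset_def by blast
      moreover have "separated d r N1" "separated d r N2" using C N unfolding chains_def by auto
      ultimately show "r \<le> d x y" using N xy unfolding separated_def by blast
    qed
  qed
  then obtain M where M: "separated d r M" "\<And>N. separated d r N \<Longrightarrow> M \<subseteq> N \<Longrightarrow> N = M"
    by blast
  have "\<exists>n\<in>M. d n g < r" for g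
  proof (rule ccontr)
    assume "\<not> (\<exists>n\<in>M. d n g < r)"
    then have far: "\<And>n. n \<in> M \<Longrightarrow> r \<le> d n g" by (simp add: not_less)
    then have "g \<notin> M" using is_metricD(1)[OF assms(1), of g] assms(2) by force
    moreover have "separated d r (insert g M)"
      using M(1) far is_metricD(2)[OF assms(1)] unfolding separated_def by auto
    ultimately show False using M(2)[of "insert g M"] by blast
  qed
  with M(1) show thesis by (rule that)
qed

context compact_generating_nbhd
begin

lemma separated_same_translate_eq:
  assumes "separated (word_metric S) 3 N" "y \<in> N" "y' \<in> N"
    and "-x + y \<in> (+) h ` interior S" "-x + y' \<in> (+) h ` interior S"
  shows "y = y'"
proof (rule ccontr)
  obtain s s' where s: "s \<in> S" "-x + y = h + s" and s': "s' \<in> S" "-x + y' = h + s'"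
    using assms(4,5) interior_subset by blast
  have "-y + y' = -(-x + y) + (-x + y')" by (simp add: minus_add add.assoc[symmetric])
  also have "\<dots> = -s + s'" unfolding s(2) s'(2) by (simp add: minus_add add.assoc[symmetric])
  finally have "word_metric S y y' = real (word_length S (-s + s'))"
    by (simp add: word_metric_def)
  also have "\<dots> \<le> real (word_length S s + word_length S s')"
    using word_length_add[of "-s" s'] by simp
  also have "\<dots> \<le> 2" using word_length_le_1[OF s(1)] word_length_le_1[OF s'(1)] by simp
  finally have "word_metric S y y' \<le> 2" .
  moreover assume "y \<noteq> y'"
  then have "3 \<le> word_metric S y y'" using assms(1-3) unfolding separated_def by blast
  ultimately show False by linarith
qed

lemma separated_uniformly_locally_finite:
  assumes "separated (word_metric S) 3 N"
  obtains B where "\<And>x. finite (N \<inter> {y. word_metric S x y \<le> real r})"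
    "\<And>x. card (N \<inter> {y. word_metric S x y \<le> real r}) \<le> B"
proof -
  obtain F where F: "finite F" "sumset_power S r \<subseteq> (\<Union>h\<in>F. (+) h ` interior S)"
    using compact_finite_translates_cover[OF compact_sumset_power[OF compact] open_interior
        zero_in_interior] by metis
  have "finite (N \<inter> {y. word_metric S x y \<le> real r}) \<and>
        card (N \<inter> {y. word_metric S x y \<le> real r}) \<le> card F" for x
  proof -
    let ?B = "N \<inter> {y. word_metric S x y \<le> real r}"
    define h where "h y = (SOME h. h \<in> F \<and> -x + y \<in> (+) h ` interior S)" for y
    have h: "h y \<in> F \<and> -x + y \<in> (+) (h y) ` interior S" if "y \<in> ?B" for y
    proof -
      have "-x + y \<in> sumset_power S r" using that by (simp add: word_metric_le_iff)
      then have "\<exists>h. h \<in> F \<and> -x + y \<in> (+) h ` interior S" using F(2) by blast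
      then show ?thesis unfolding h_def by (rule someI_ex)
    qed
    have inj: "inj_on h ?B"
    proof (rule inj_onI)
      fix y y' assume "y \<in> ?B" "y' \<in> ?B" "h y = h y'"
      then show "y = y'" using h separated_same_translate_eq[OF assms] by (metis IntD1)
    qed
    have sub: "h ` ?B \<subseteq> F" using h by blast
    show ?thesis using inj_on_finite[OF inj sub F(1)] card_inj_on_le[OF inj sub F(1)] by simp
  qed
  then show thesis using that[of "card F"] by blast
qed

end

locale word_net = compact_generating_nbhd S for S :: "'a::topological_group_add set" +
  fixes N :: "'a set"
  assumes separated: "separated (word_metric S) 3 N"
    and covering: "\<And>g. \<exists>n\<in>N. word_metric S n g < 3"
begin

definition nearest :: "'a \<Rightarrow> 'a" where
  "nearest g = (SOME n. n \<in> N \<and> word_metric S n g < 3)"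

text \<open>Graph vertices are natural numbers, so the countable net is enumerated by \<open>to_nat_on N\<close>.
  The edge threshold \<open>5 = 2 + 1 + 2\<close> makes the nearest net points of \<open>S\<close>-neighbours adjacent.\<close>

definition vertex :: "'a \<Rightarrow> nat" where
  "vertex g = to_nat_on N (nearest g)"

definition vertices :: "nat set" where
  "vertices = to_nat_on N ` N"

definition net_edge :: "nat \<Rightarrow> nat \<Rightarrow> bool" where
  "net_edge a b \<longleftrightarrow> a \<in> vertices \<and> b \<in> vertices \<and> a \<noteq> b \<and>
     word_metric S (from_nat_into N a) (from_nat_into N b) \<le> 5"

lemma nearest: "nearest g \<in> N" "word_metric S (nearest g) g \<le> 2"
proof -
  have "\<exists>n. n \<in> N \<and> word_metric S n g < 3" using covering[of g] by blast
  then have "nearest g \<in> N \<and> word_metric S (nearest g) g < 3"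
    unfolding nearest_def by (rule someI_ex)
  then show "nearest g \<in> N" "word_metric S (nearest g) g \<le> 2"
    by (simp_all add: word_metric_def)
qed

lemma nearest_eq: "n \<in> N \<Longrightarrow> nearest n = n"
proof (rule ccontr)
  assume "n \<in> N" "nearest n \<noteq> n"
  then have "3 \<le> word_metric S (nearest n) n"
    using nearest(1)[of n] separated unfolding separated_def by blast
  then show False using nearest(2)[of n] by linarith
qed

lemma countable_net: "countable N"
proof (rule countable_subset)
  show "N \<subseteq> (\<Union>r. N \<inter> {y. word_metric S 0 y \<le> real r})"
  proof
    fix y assume "y \<in> N"
    then have "y \<in> N \<inter> {z. word_metric S 0 z \<le> real (word_length S y)}"
      by (simp add: word_metric_def)
    then show "y \<in> (\<Union>r. N \<inter> {y. word_metric S 0 y \<le> real r})" by blast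
  qed
  have "finite (N \<inter> {y. word_metric S 0 y \<le> real r})" for r
    using separated_uniformly_locally_finite[OF separated, of r] by metis
  then show "countable (\<Union>r. N \<inter> {y. word_metric S 0 y \<le> real r})"
    by (intro countable_UN countableI_type countable_finite)
qed

lemma from_nat_into_vertex: "from_nat_into N (vertex g) = nearest g"
  unfolding vertex_def using countable_net nearest(1) by simp

lemma vertex_from_nat_into: "a \<in> vertices \<Longrightarrow> vertex (from_nat_into N a) = a"
  unfolding vertices_def vertex_def using countable_net nearest_eq by auto

lemma vertex_in_vertices: "vertex g \<in> vertices"
  unfolding vertices_def vertex_def using nearest(1) by blast

lemma is_graph_net: "is_graph vertices net_edge"
  unfolding is_graph_def net_edge_def using is_metricD(2)[OF is_metric_word_metric] by auto

lemma net_edge_if_close: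
  assumes "vertex x \<noteq> vertex y" "word_metric S x y \<le> 1"
  shows "net_edge (vertex x) (vertex y)"
proof -
  have "word_metric S (nearest x) (nearest y) \<le>
        word_metric S (nearest x) x + word_metric S x y + word_metric S y (nearest y)"
    using is_metricD(3)[OF is_metric_word_metric, of "nearest x" "nearest y" x]
      is_metricD(3)[OF is_metric_word_metric, of x "nearest y" y] by linarith
  also have "\<dots> \<le> 5"
    using nearest(2)[of x] nearest(2)[of y] assms(2)
      is_metricD(2)[OF is_metric_word_metric, of y "nearest y"] by linarith
  finally show ?thesis
    unfolding net_edge_def using assms(1) vertex_in_vertices by (simp add: from_nat_into_vertex)
qed

lemma walk_between_vertices:
  obtains ws where "walk net_edge ws" "hd ws = vertex x" "last ws = vertex y"
    "length ws \<le> Suc (word_length S (-x + y))"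
proof -
  obtain xs where xs: "hd xs = x" "last xs = y" "length xs = Suc (word_length S (-x + y))"
    "successively (\<lambda>u v. -u + v \<in> S) xs"
    using sumset_power_path mem_sumset_power_iff by blast
  have "xs \<noteq> []" using xs(3) by auto
  have step: "vertex u = vertex v \<or> net_edge (vertex u) (vertex v)" if "-u + v \<in> S" for u v
  proof -
    have "word_metric S u v \<le> 1" using that word_metric_le_iff[of u v 1] by simp
    then show ?thesis using net_edge_if_close by blast
  qed
  have "successively (\<lambda>a b. a = b \<or> net_edge a b) (map vertex xs)"
    unfolding successively_map using xs(4) by (rule successively_mono) (rule step)
  then have "walk net_edge (remdups_adj (map vertex xs))"
    using \<open>xs \<noteq> []\<close> by (intro walk_remdups_adj) auto
  moreover have "length (remdups_adj (map vertex xs)) \<le> length xs"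
    using remdups_adj_length[of "map vertex xs"] by simp
  ultimately show thesis
    using that xs(1-3) \<open>xs \<noteq> []\<close> by (simp add: hd_map last_map)
qed

lemma graph_connected_net: "graph_connected vertices net_edge"
  unfolding graph_connected_def
proof (intro ballI)
  fix a b assume "a \<in> vertices" "b \<in> vertices"
  obtain ws where "walk net_edge ws" "hd ws = vertex (from_nat_into N a)"
    "last ws = vertex (from_nat_into N b)"
    "length ws \<le> Suc (word_length S (- from_nat_into N a + from_nat_into N b))"
    by (rule walk_between_vertices)
  then show "\<exists>xs. walk net_edge xs \<and> hd xs = a \<and> last xs = b"
    using vertex_from_nat_into \<open>a \<in> vertices\<close> \<open>b \<in> vertices\<close> by auto
qed

lemma graph_dist_vertex_le: "graph_dist net_edge (vertex x) (vertex y) \<le> word_metric S x y"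
proof -
  obtain ws where ws: "walk net_edge ws" "hd ws = vertex x" "last ws = vertex y"
    "length ws \<le> Suc (word_length S (-x + y))"
    by (rule walk_between_vertices)
  have "graph_dist net_edge (vertex x) (vertex y) \<le> real (length ws - 1)"
    by (rule graph_dist_le_length[OF ws(1-3)])
  also have "\<dots> \<le> word_metric S x y" using ws(4) by (simp add: word_metric_def)
  finally show ?thesis .
qed

lemma word_metric_le_graph_dist:
  "word_metric S x y \<le> 5 * graph_dist net_edge (vertex x) (vertex y) + 4"
proof -
  obtain ws0 where ws0: "walk net_edge ws0" "hd ws0 = vertex x" "last ws0 = vertex y"
    "length ws0 \<le> Suc (word_length S (-x + y))"
    by (rule walk_between_vertices)
  obtain ws where ws: "walk net_edge ws" "hd ws = vertex x" "last ws = vertex y"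
    "real (length ws) = graph_dist net_edge (vertex x) (vertex y) + 1"
    by (rule graph_dist_attained[OF ws0(1-3)])
  have "ws \<noteq> []" "successively net_edge ws" using ws(1) by (simp_all add: walk_iff_successively)
  have "successively (\<lambda>u v. word_metric S u v \<le> 5) (map (from_nat_into N) ws)"
    unfolding successively_map using \<open>successively net_edge ws\<close>
    by (rule successively_mono) (simp add: net_edge_def)
  then have "word_metric S (hd (map (from_nat_into N) ws)) (last (map (from_nat_into N) ws))
      \<le> 5 * real (length (map (from_nat_into N) ws) - 1)"
    by (rule dist_hd_last_le_steps[OF is_metric_word_metric]) (use \<open>ws \<noteq> []\<close> in simp)
  then have "word_metric S (nearest x) (nearest y) \<le> 5 * real (length ws - 1)"
    using ws(2,3) \<open>ws \<noteq> []\<close> by (simp add: hd_map last_map from_nat_into_vertex)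
  also have "real (length ws - 1) = graph_dist net_edge (vertex x) (vertex y)"
    using ws(4) \<open>ws \<noteq> []\<close> by (cases ws) auto
  finally have "word_metric S (nearest x) (nearest y) \<le>
      5 * graph_dist net_edge (vertex x) (vertex y)" .
  moreover have "word_metric S x y \<le>
      word_metric S x (nearest x) + word_metric S (nearest x) (nearest y) +
      word_metric S (nearest y) y"
    using is_metricD(3)[OF is_metric_word_metric, of x y "nearest x"]
      is_metricD(3)[OF is_metric_word_metric, of "nearest x" y "nearest y"] by linarith
  moreover have "word_metric S x (nearest x) \<le> 2" "word_metric S (nearest y) y \<le> 2"
    using nearest(2)[of x] nearest(2)[of y]
      is_metricD(2)[OF is_metric_word_metric, of x "nearest x"] by simp_all
  ultimately show ?thesis by linarith
qed

lemma bounded_degree_net: "bounded_degree vertices net_edge"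
proof -
  obtain B where B: "\<And>x. finite (N \<inter> {y. word_metric S x y \<le> real 5})"
    "\<And>x. card (N \<inter> {y. word_metric S x y \<le> real 5}) \<le> B"
    by (rule separated_uniformly_locally_finite[OF separated, of 5]) (rule that)
  have "finite {b. net_edge a b} \<and> card {b. net_edge a b} \<le> B" for a
  proof -
    let ?ball = "N \<inter> {y. word_metric S (from_nat_into N a) y \<le> real 5}"
    have sub: "{b. net_edge a b} \<subseteq> to_nat_on N ` ?ball"
    proof
      fix b assume "b \<in> {b. net_edge a b}"
      then have b: "b \<in> vertices" "word_metric S (from_nat_into N a) (from_nat_into N b) \<le> 5"
        unfolding net_edge_def by auto
      then have "N \<noteq> {}" unfolding vertices_def by blast
      then have "from_nat_into N b \<in> ?ball" using b(2) from_nat_into[of N b] by simp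
      moreover have "b = to_nat_on N (from_nat_into N b)"
        using b(1) unfolding vertices_def by (rule to_nat_on_from_nat_into[symmetric])
      ultimately show "b \<in> to_nat_on N ` ?ball" by blast
    qed
    have fin: "finite (to_nat_on N ` ?ball)" using B(1) by (rule finite_imageI)
    have "card {b. net_edge a b} \<le> card (to_nat_on N ` ?ball)" by (rule card_mono[OF fin sub])
    also have "\<dots> \<le> card ?ball" by (rule card_image_le[OF B(1)])
    also have "\<dots> \<le> B" by (rule B(2))
    finally show ?thesis using finite_subset[OF sub fin] by blast
  qed
  then show ?thesis unfolding bounded_degree_def by blast
qed

lemma qi_to_bounded_degree_graph_net: "qi_to_bounded_degree_graph (word_metric S)"
  unfolding qi_to_bounded_degree_graph_def
proof (intro exI[of _ vertices] exI[of _ net_edge] exI[of _ vertex] conjI)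
  show "quasi_isometry UNIV (word_metric S) vertices (graph_dist net_edge) vertex"
    unfolding quasi_isometry_def
  proof (intro conjI exI[of _ "5::real"] ballI)
    show "word_metric S x y / 5 - 5 \<le> graph_dist net_edge (vertex x) (vertex y)" for x y
      using word_metric_le_graph_dist[of x y] by linarith
    show "graph_dist net_edge (vertex x) (vertex y) \<le> 5 * word_metric S x y + 5" for x y
      using graph_dist_vertex_le[of x y] by (simp add: word_metric_def)
    show "\<exists>x\<in>UNIV. graph_dist net_edge z (vertex x) \<le> 5" if "z \<in> vertices" for z
    proof
      show "graph_dist net_edge z (vertex (from_nat_into N z)) \<le> 5"
        using that by (simp add: vertex_from_nat_into graph_dist_refl)
    qed simp
  qed (use vertex_in_vertices in auto)
  show "vertices \<noteq> {}" using vertex_in_vertices by blast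
qed (rule is_graph_net graph_connected_net bounded_degree_net)+

end

lemma (in compact_generating_nbhd) qi_to_bounded_degree_graph_word_metric:
  "qi_to_bounded_degree_graph (word_metric S)"
proof -
  obtain N where "separated (word_metric S) 3 N" "\<And>g. \<exists>n\<in>N. word_metric S n g < 3"
    by (rule maximal_separated_set[OF is_metric_word_metric, of 3]) (auto intro: that)
  then interpret word_net S N by unfold_locales
  show ?thesis by (rule qi_to_bounded_degree_graph_net)
qed

lemma word_metric_if_compactly_generated:
  assumes "locally_compact_space (euclidean :: 'a::topological_group_add topology)"
    and "compactly_generated TYPE('a)"
  shows "\<exists>d :: 'a \<Rightarrow> 'a \<Rightarrow> real. uniform_metric d \<and> coarsely_geodesic d \<and>
      quasi_geodesic d \<and> is_metric d \<and> left_invariant d \<and> proper_metric d \<and>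
      qi_to_bounded_degree_graph d"
proof -
  obtain K :: "'a set" where "compact K" "generated_subgroup K = UNIV"
    using assms(2) unfolding compactly_generated_def by blast
  then obtain S :: "'a set" where "compact_generating_nbhd S"
    using compact_generating_nbhd_exists[OF assms(1)] by blast
  then interpret compact_generating_nbhd S .
  show ?thesis
    using uniform_metric_word_metric coarsely_geodesic_word_metric quasi_geodesic_word_metric
      is_metric_word_metric left_invariant_word_metric proper_metric_word_metric
      qi_to_bounded_degree_graph_word_metric by blast
qed

theorem proposition6p4:
  assumes "locally_compact_space (euclidean :: ('a::{topological_group_add, t2_space}) topology)"
  shows "((\<exists>d :: 'a \<Rightarrow> 'a \<Rightarrow> real. uniform_metric d \<and> coarsely_geodesic d)
           \<longleftrightarrow> (\<exists>d :: 'a \<Rightarrow> 'a \<Rightarrow> real. uniform_metric d \<and> quasi_geodesic d))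
       \<and> ((\<exists>d :: 'a \<Rightarrow> 'a \<Rightarrow> real. uniform_metric d \<and> quasi_geodesic d)
           \<longleftrightarrow> (\<exists>d :: 'a \<Rightarrow> 'a \<Rightarrow> real. is_metric d \<and> left_invariant d \<and> proper_metric d \<and> quasi_geodesic d))
       \<and> ((\<exists>d :: 'a \<Rightarrow> 'a \<Rightarrow> real. is_metric d \<and> left_invariant d \<and> proper_metric d \<and> quasi_geodesic d)
           \<longleftrightarrow> (\<exists>d :: 'a \<Rightarrow> 'a \<Rightarrow> real. is_metric d \<and> left_invariant d \<and> proper_metric d \<and> qi_to_bounded_degree_graph d))
       \<and> ((\<exists>d :: 'a \<Rightarrow> 'a \<Rightarrow> real. is_metric d \<and> left_invariant d \<and> proper_metric d \<and> qi_to_bounded_degree_graph d)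
           \<longleftrightarrow> compactly_generated TYPE('a))"
proof -
  let "(?P1 \<longleftrightarrow> ?P2) \<and> (_ \<longleftrightarrow> ?P3) \<and> (_ \<longleftrightarrow> ?P4) \<and> (_ \<longleftrightarrow> ?P5)" = ?thesis
  have "?P1 \<longrightarrow> ?P5" "?P2 \<longrightarrow> ?P5"
    using compactly_generated_if_uniform_chain_connected[OF assms]
    unfolding coarsely_geodesic_def quasi_geodesic_def by blast+
  moreover have "?P3 \<longrightarrow> ?P5"
    using compactly_generated_if_proper_left_invariant unfolding quasi_geodesic_def by blast
  moreover have "?P4 \<longrightarrow> ?P5"
    using compactly_generated_if_quasi_isometric_to_graph by blast
  moreover have "?P5 \<longrightarrow> ?P1 \<and> ?P2 \<and> ?P3 \<and> ?P4"
    using word_metric_if_compactly_generated[OF assms] by blast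
  ultimately show ?thesis by blast
qed

end
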